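(* For every hypothesis class $\mathcal{H} \subseteq \{0,1\}^{\mathcal{X}}$ and every time horizon $T \in \mathbb{N}$, $$\frac{1}{8}\min\Bigl\{\max\Bigl\{\sqrt{(\operatorname{W}(\mathcal{H})-1)\,T},\ \operatorname{L}(\mathcal{H})\Bigr\},\ T\Bigr\} \;\le\; \inf_{\mathcal{A}} \operatorname{M}_{\mathcal{A}}(T,\mathcal{H}) \;\le\; \operatorname{AL}_{\operatorname{W}(\mathcal{H})}(\mathcal{H}) + 2\sqrt{(\operatorname{W}(\mathcal{H})-1)\,T},$$ where the infimum is over all (possibly randomized) online learners operating under apple tasting feedback.
   Context: Online binary classification: over rounds $t=1,\dots,T$, an adversary picks $(x_t,y_t)\in\mathcal{X}\times\{0,1\}$ and reveals $x_t$; the learner $\mathcal{A}$ (possibly randomized) outputs a prediction $\hat y_t=\mathcal{A}(x_t)\in\{0,1\}$ based on the history; under apple tasting feedback the learner observes $y_t$ only if $\hat y_t=1$. In the realizable setting, $\operatorname{M}_{\mathcal{A}}(T,\mathcal{H}) := \sup_{h\in\mathcal{H}}\sup_{x_1,\dots,x_T}\mathbb{E}\bigl[\sum_{t=1}^T \mathbb{1}\{\mathcal{A}(x_t)\neq h(x_t)\}\bigr]$ with $y_t=h(x_t)$, the expectation being over the learner's randomness. Apple Littlestone (AL) tree of width $w\in\mathbb{N}=\{1,2,\dots\}$ and depth $d$: call a binary string $u$ an internal node if $|u|<d$ and $u$ contains fewer than $w$ ones; the tree assigns an instance $x_u\in\mathcal{X}$ to every internal node. A path is a binary string $\sigma$ all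 of whose proper prefixes are internal nodes but which is not itself an internal node (so either $|\sigma|=d$ or $\sigma$ contains exactly $w$ ones). The tree is shattered by $\mathcal{H}$ if for every path $\sigma$ there is $h\in\mathcal{H}$ with $h(x_{(\sigma_1,\dots,\sigma_{i-1})})=\sigma_i$ for all $i\le|\sigma|$. (When $w\ge d$ this is a complete binary tree of depth $d$, i.e. a Littlestone tree.) The Littlestone dimension $\operatorname{L}(\mathcal{H})$ is the largest $d$ such that a complete binary (Littlestone) tree of depth $d$ is shattered by $\mathcal{H}$ ($\infty$ if arbitrarily large depths are shattered). The Apple Littlestone dimension $\operatorname{AL}_w(\mathcal{H})$ is the largest $d$ such that an AL tree of width $w$ and depth $d$ is shattered by $\mathcal{H}$; it is $\infty$ if arbitrarily large depths occur and $0$ if there is no shattered AL tree of width $w$. The Effective width $\operatorname{W}(\mathcal{H})$ is the smallest $w\in\mathbb{N}$ with $\operatorname{AL}_w(\mathcal{H})<\infty$, and $\infty$ if none exists. *)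

theory Defs
  imports "HOL-Probability.Probability"
begin

text \<open>A history entry records the revealed instance and the feedback: Some y if the
learner predicted 1 (so the label y was revealed), None if it predicted 0.
(The learner's own prediction is recoverable as feedback \<noteq> None.)\<close>
type_synonym 'x history = "('x \<times> bool option) list"

text \<open>A (possibly randomized) learner: given the history and the current instance it
outputs a distribution over predictions (behavioural randomisation; with perfect recall
of its own predictions this covers all randomized learners).\<close>
type_synonym 'x learner = "'x history \<Rightarrow> 'x \<Rightarrow> bool pmf"

fun mistakes_pmf :: "'x learner \<Rightarrow> ('x \<Rightarrow> bool) \<Rightarrow> 'x list \<Rightarrow> 'x history \<Rightarrow> nat pmf" where
  "mistakes_pmf A h [] hist = return_pmf 0"
| "mistakes_pmf A h (x # xs) hist =
     bind_pmf (A hist x) (\<lambda>yhat.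
       map_pmf (\<lambda>m. m + (if yhat \<noteq> h x then 1 else 0))
         (mistakes_pmf A h xs (hist @ [(x, if yhat then Some (h x) else None)])))"

definition expected_mistakes :: "'x learner \<Rightarrow> ('x \<Rightarrow> bool) \<Rightarrow> 'x list \<Rightarrow> ennreal" where
  "expected_mistakes A h xs = (\<integral>\<^sup>+ m. ennreal (real m) \<partial>measure_pmf (mistakes_pmf A h xs []))"

definition M :: "'x learner \<Rightarrow> nat \<Rightarrow> ('x \<Rightarrow> bool) set \<Rightarrow> ennreal" where
  "M A T H = (SUP h\<in>H. SUP xs\<in>{xs. length xs = T}. expected_mistakes A h xs)"

text \<open>Nodes are binary strings (bool lists, True = 1); a tree assigns instances to nodes.\<close>
definition internal_node :: "nat \<Rightarrow> nat \<Rightarrow> bool list \<Rightarrow> bool" where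
  "internal_node w d u \<longleftrightarrow> length u < d \<and> length (filter id u) < w"

definition AL_path :: "nat \<Rightarrow> nat \<Rightarrow> bool list \<Rightarrow> bool" where
  "AL_path w d \<sigma> \<longleftrightarrow> (\<forall>i<length \<sigma>. internal_node w d (take i \<sigma>)) \<and> \<not> internal_node w d \<sigma>"

definition AL_shattered :: "('x \<Rightarrow> bool) set \<Rightarrow> nat \<Rightarrow> nat \<Rightarrow> (bool list \<Rightarrow> 'x) \<Rightarrow> bool" where
  "AL_shattered H w d t \<longleftrightarrow>
     (\<forall>\<sigma>. AL_path w d \<sigma> \<longrightarrow> (\<exists>h\<in>H. \<forall>i<length \<sigma>. h (t (take i \<sigma>)) = \<sigma> ! i))"

definition AL_dim :: "nat \<Rightarrow> ('x \<Rightarrow> bool) set \<Rightarrow> enat" where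
  "AL_dim w H = Sup {enat d | d. \<exists>t. AL_shattered H w d t}"

definition L_shattered :: "('x \<Rightarrow> bool) set \<Rightarrow> nat \<Rightarrow> (bool list \<Rightarrow> 'x) \<Rightarrow> bool" where
  "L_shattered H d t \<longleftrightarrow>
     (\<forall>\<sigma>. length \<sigma> = d \<longrightarrow> (\<exists>h\<in>H. \<forall>i<length \<sigma>. h (t (take i \<sigma>)) = \<sigma> ! i))"

definition L_dim :: "('x \<Rightarrow> bool) set \<Rightarrow> enat" where
  "L_dim H = Sup {enat d | d. \<exists>t. L_shattered H d t}"

definition eff_width :: "('x \<Rightarrow> bool) set \<Rightarrow> enat" where
  "eff_width H = (if \<exists>w\<ge>1. AL_dim w H < \<infinity>
                  then enat (LEAST w. w \<ge> 1 \<and> AL_dim w H < \<infinity>) else \<infinity>)"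

definition sqrt_term :: "('x \<Rightarrow> bool) set \<Rightarrow> nat \<Rightarrow> ennreal" where
  "sqrt_term H T = (case eff_width H of
      enat w \<Rightarrow> ennreal (sqrt ((real w - 1) * real T)) | \<infinity> \<Rightarrow> \<infinity>)"

end

theory Submission
  imports Defs
begin

text \<open>Upper bound: a randomized variant of the standard optimal algorithm keeps a version
  space V and a width budget b, initially H and W = W(H). On an instance x whose zero side
  has smaller AL_b dimension than V it predicts 1, so that a mistake lowers the dimension;
  otherwise it predicts 1 only with probability p. A revealed label 1 in the second case
  spends one unit of width, and then the one side has smaller AL_(b-1) dimension than V,
  for otherwise the trees of the two sides could be grafted below x. Hence the potential
  AL_b(V) + (b - 1) / p bounds the expected number of mistakes by AL_W(H) + p T + (W - 1) / p,
  and p = sqrt ((W - 1) / T) balances the last two terms.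

  Lower bound: given an AL tree of width k and depth k m shattered by H, an oblivious
  adversary walks down the tree, presenting each node's instance m times and following the
  1-edge with probability 1 / (2 m) at each node. Before it predicts 1 the learner cannot tell
  the two branches apart, so every node of the walk costs it 1/3 of a mistake in expectation,
  and some outcome of the adversary, a sequence labelled by a hypothesis of H, costs at least
  as much. With k = W - 1 and m = floor (sqrt (T / k)) this gives sqrt ((W - 1) T) / 8, and
  m = 1 on a Littlestone tree gives L(H) / 8.\<close>

section \<open>Expected number of mistakes\<close>

text \<open>A randomized oblivious adversary is a finite tree of random choices: Play x y reveals
  the instance x with label y, Mix \<alpha> a b continues as a with probability \<alpha> and as b
  otherwise.\<close>
datatype 'x adversary = Stop | Play 'x bool "'x adversary" | Mix real "'x adversary" "'x adversary"

fun adv_loss :: "'x learner \<Rightarrow> 'x adversary \<Rightarrow> 'x history \<Rightarrow> real" where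
  "adv_loss A Stop hist = 0"
| "adv_loss A (Play x y a) hist =
     pmf (A hist x) True * (of_bool (\<not> y) + adv_loss A a (hist @ [(x, Some y)]))
   + (1 - pmf (A hist x) True) * (of_bool y + adv_loss A a (hist @ [(x, None)]))"
| "adv_loss A (Mix \<alpha> a b) hist = \<alpha> * adv_loss A a hist + (1 - \<alpha>) * adv_loss A b hist"

fun plays :: "('x \<times> bool) list \<Rightarrow> 'x adversary \<Rightarrow> 'x adversary" where
  "plays [] a = a"
| "plays ((x, y) # zs) a = Play x y (plays zs a)"

fun outcomes :: "'x adversary \<Rightarrow> ('x \<times> bool) list set" where
  "outcomes Stop = {[]}"
| "outcomes (Play x y a) = (\<lambda>zs. (x, y) # zs) ` outcomes a"
| "outcomes (Mix \<alpha> a b) = outcomes a \<union> outcomes b"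

fun unit_weights :: "'x adversary \<Rightarrow> bool" where
  "unit_weights Stop = True"
| "unit_weights (Play x y a) = unit_weights a"
| "unit_weights (Mix \<alpha> a b) = (0 \<le> \<alpha> \<and> \<alpha> \<le> 1 \<and> unit_weights a \<and> unit_weights b)"

definition loss :: "'x learner \<Rightarrow> ('x \<Rightarrow> bool) \<Rightarrow> 'x list \<Rightarrow> 'x history \<Rightarrow> real" where
  "loss A h xs hist = adv_loss A (plays (map (\<lambda>x. (x, h x)) xs) Stop) hist"

lemma loss_Nil [simp]: "loss A h [] hist = 0"
  by (simp add: loss_def)

lemma loss_Cons [simp]:
  "loss A h (x # xs) hist =
     pmf (A hist x) True * (of_bool (\<not> h x) + loss A h xs (hist @ [(x, Some (h x))]))
   + (1 - pmf (A hist x) True) * (of_bool (h x) + loss A h xs (hist @ [(x, None)]))"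
  by (simp add: loss_def)

lemma convex_comb_le:
  fixes q a b c :: real
  assumes "0 \<le> q" "q \<le> 1" "a \<le> c" "b \<le> c"
  shows "q * a + (1 - q) * b \<le> c"
  using assms by (intro convex_bound_le) auto

lemma convex_comb_ge:
  fixes q a b c :: real
  assumes "0 \<le> q" "q \<le> 1" "c \<le> a" "c \<le> b"
  shows "c \<le> q * a + (1 - q) * b"
  using convex_comb_le[of q "- a" "- c" "- b"] assms by (simp add: algebra_simps)

lemma loss_nonneg: "0 \<le> loss A h xs hist"
  by (induction xs arbitrary: hist) (auto intro!: convex_comb_ge simp: pmf_le_1)

lemma loss_le_length: "loss A h xs hist \<le> length xs"
proof (induction xs arbitrary: hist)
  case (Cons x xs)
  have "of_bool b + loss A h xs hist' \<le> length (x # xs)" for b hist'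
    using Cons.IH[of hist'] by (cases b) auto
  then show ?case
    by (simp only: loss_Cons) (rule convex_comb_le; simp add: pmf_le_1)
qed simp

lemma loss_le_append: "loss A h xs hist \<le> loss A h (xs @ ys) hist"
proof (induction xs arbitrary: hist)
  case (Cons x xs)
  then show ?case
    by (simp only: loss_Cons append_Cons) (intro add_mono mult_left_mono; simp add: pmf_le_1)
qed (simp add: loss_nonneg)

lemma nn_integral_mistakes_pmf:
  "(\<integral>\<^sup>+ m. ennreal (real m) \<partial>measure_pmf (mistakes_pmf A h xs hist)) = ennreal (loss A h xs hist)"
proof (induction xs arbitrary: hist)
  case (Cons x xs)
  let ?hist = "\<lambda>yhat. hist @ [(x, if yhat then Some (h x) else None)]"
  have step: "(\<integral>\<^sup>+ m. ennreal (real (m + (if yhat \<noteq> h x then 1 else 0)))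
                 \<partial>measure_pmf (mistakes_pmf A h xs (?hist yhat)))
            = ennreal (of_bool (yhat \<noteq> h x) + loss A h xs (?hist yhat))" for yhat
  proof -
    have "(\<integral>\<^sup>+ m. ennreal (real (m + (if yhat \<noteq> h x then 1 else 0)))
                 \<partial>measure_pmf (mistakes_pmf A h xs (?hist yhat)))
        = (\<integral>\<^sup>+ m. ennreal (real m) + ennreal (of_bool (yhat \<noteq> h x))
                 \<partial>measure_pmf (mistakes_pmf A h xs (?hist yhat)))"
      by (intro nn_integral_cong) (simp add: ennreal_plus[symmetric] del: ennreal_plus)
    also have "\<dots> = ennreal (loss A h xs (?hist yhat)) + ennreal (of_bool (yhat \<noteq> h x))"
      by (subst nn_integral_add) (simp_all add: Cons measure_pmf.emeasure_space_1)
    finally show ?thesis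
      by (simp add: ennreal_plus[symmetric] loss_nonneg add.commute del: ennreal_plus)
  qed
  have "(\<integral>\<^sup>+ m. ennreal (real m) \<partial>measure_pmf (mistakes_pmf A h (x # xs) hist))
      = (\<integral>\<^sup>+ yhat. ennreal (of_bool (yhat \<noteq> h x) + loss A h xs (?hist yhat)) \<partial>measure_pmf (A hist x))"
    by (simp only: mistakes_pmf.simps nn_integral_bind_pmf nn_integral_map_pmf step)
  also have "\<dots> = (\<Sum>yhat\<in>UNIV. ennreal (pmf (A hist x) yhat)
                      * ennreal (of_bool (yhat \<noteq> h x) + loss A h xs (?hist yhat)))"
    unfolding nn_integral_measure_pmf by (rule nn_integral_count_space_finite) simp
  also have "\<dots> = ennreal (loss A h (x # xs) hist)"
    by (cases "h x") (simp_all add: UNIV_bool pmf_False_conv_True[of "A hist x"] ennreal_mult[symmetric]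
        ennreal_plus[symmetric] loss_nonneg pmf_le_1 del: ennreal_plus)
  finally show ?case .
qed simp

lemma expected_mistakes_eq_loss: "expected_mistakes A h xs = ennreal (loss A h xs [])"
  by (simp add: expected_mistakes_def nn_integral_mistakes_pmf)

lemma M_le_ennrealI:
  assumes "\<And>h xs. h \<in> H \<Longrightarrow> length xs = T \<Longrightarrow> loss A h xs [] \<le> B"
  shows "M A T H \<le> ennreal B"
  unfolding M_def expected_mistakes_eq_loss
  by (intro SUP_least) (auto intro: ennreal_leI assms)

lemma loss_le_M:
  assumes "h \<in> H" "length xs = T"
  shows "ennreal (loss A h xs []) \<le> M A T H"
  unfolding M_def expected_mistakes_eq_loss[symmetric]
  by (rule SUP_upper2[OF assms(1)], rule SUP_upper) (use assms in simp)

section \<open>Apple Littlestone trees\<close>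

definition AL_partial_path :: "nat \<Rightarrow> nat \<Rightarrow> bool list \<Rightarrow> bool" where
  "AL_partial_path w d \<sigma> \<longleftrightarrow> (\<forall>i<length \<sigma>. internal_node w d (take i \<sigma>))"

definition path_consistent :: "(bool list \<Rightarrow> 'x) \<Rightarrow> bool list \<Rightarrow> ('x \<Rightarrow> bool) \<Rightarrow> bool" where
  "path_consistent t \<sigma> h \<longleftrightarrow> (\<forall>i<length \<sigma>. h (t (take i \<sigma>)) = \<sigma> ! i)"

lemma AL_path_iff: "AL_path w d \<sigma> \<longleftrightarrow> AL_partial_path w d \<sigma> \<and> \<not> internal_node w d \<sigma>"
  by (simp add: AL_path_def AL_partial_path_def)

lemma AL_shattered_iff:
  "AL_shattered H w d t \<longleftrightarrow> (\<forall>\<sigma>. AL_path w d \<sigma> \<longrightarrow> (\<exists>h\<in>H. path_consistent t \<sigma> h))"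
  by (simp add: AL_shattered_def path_consistent_def)

lemma internal_node_mono:
  "internal_node w d u \<Longrightarrow> w \<le> w' \<Longrightarrow> d \<le> d' \<Longrightarrow> internal_node w' d' u"
  by (simp add: internal_node_def)

lemma AL_partial_path_mono:
  "AL_partial_path w d \<sigma> \<Longrightarrow> w \<le> w' \<Longrightarrow> d \<le> d' \<Longrightarrow> AL_partial_path w' d' \<sigma>"
  by (meson AL_partial_path_def internal_node_mono)

lemma AL_partial_path_length_le:
  assumes "AL_partial_path w d \<sigma>"
  shows "length \<sigma> \<le> d"
proof (rule ccontr)
  assume "\<not> length \<sigma> \<le> d"
  then have "internal_node w d (take d \<sigma>)" using assms by (simp add: AL_partial_path_def)
  then show False using \<open>\<not> length \<sigma> \<le> d\<close> by (simp add: internal_node_def)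
qed

lemma AL_partial_path_append:
  assumes "AL_partial_path w d a" "AL_partial_path w' d' b"
    and "length (filter id a) + w' \<le> w" "length a + d' \<le> d"
  shows "AL_partial_path w d (a @ b)"
  unfolding AL_partial_path_def
proof (intro allI impI)
  fix i assume "i < length (a @ b)"
  then consider "i < length a" | j where "i = length a + j" "j < length b"
    by (metis add_diff_inverse_nat length_append nat_add_left_cancel_less)
  then show "internal_node w d (take i (a @ b))"
  proof cases
    case 1
    then show ?thesis using assms(1) by (simp add: AL_partial_path_def)
  next
    case 2
    then have "internal_node w' d' (take j b)" using assms(2) by (simp add: AL_partial_path_def)
    then show ?thesis using 2 assms(3,4) by (simp add: internal_node_def)
  qed
qed

lemma path_consistent_append:
  assumes "path_consistent t (\<sigma> @ \<tau>) h"
  shows "path_consistent t \<sigma> h"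
  unfolding path_consistent_def
proof (intro allI impI)
  fix i assume i: "i < length \<sigma>"
  with assms have "h (t (take i (\<sigma> @ \<tau>))) = (\<sigma> @ \<tau>) ! i"
    unfolding path_consistent_def by (metis length_append trans_less_add1)
  with i show "h (t (take i \<sigma>)) = \<sigma> ! i" by (simp add: nth_append)
qed

text \<open>Pad the partial path with zeros until the depth is exhausted.\<close>
lemma AL_shattered_partial_path:
  assumes "AL_shattered H w d t" "AL_partial_path w d \<rho>"
  shows "\<exists>h\<in>H. path_consistent t \<rho> h"
proof (cases "internal_node w d \<rho>")
  case True
  let ?k = "d - length \<rho>"
  have "AL_partial_path (w - length (filter id \<rho>)) ?k (replicate ?k False)"
    using True by (simp add: AL_partial_path_def internal_node_def)
  then have "AL_partial_path w d (\<rho> @ replicate ?k False)"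
    using True assms(2) by (intro AL_partial_path_append) (auto simp: internal_node_def)
  moreover have "\<not> internal_node w d (\<rho> @ replicate ?k False)"
    using True by (simp add: internal_node_def)
  ultimately obtain h where "h \<in> H" "path_consistent t (\<rho> @ replicate ?k False) h"
    using assms(1) by (auto simp: AL_shattered_iff AL_path_iff)
  then show ?thesis by (blast dest: path_consistent_append)
next
  case False
  then show ?thesis using assms by (simp add: AL_shattered_iff AL_path_iff)
qed

lemma AL_shattered_antimono:
  assumes "AL_shattered H w d t" "w' \<le> w" "d' \<le> d"
  shows "AL_shattered H w' d' t"
  unfolding AL_shattered_iff AL_path_iff
proof (intro allI impI)
  fix \<sigma> assume "AL_partial_path w' d' \<sigma> \<and> \<not> internal_node w' d' \<sigma>"
  then have "AL_partial_path w d \<sigma>" using assms(2,3) by (blast intro: AL_partial_path_mono)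
  then show "\<exists>h\<in>H. path_consistent t \<sigma> h" by (rule AL_shattered_partial_path[OF assms(1)])
qed

lemma AL_shattered_subset_mono: "AL_shattered V w d t \<Longrightarrow> V \<subseteq> V' \<Longrightarrow> AL_shattered V' w d t"
  unfolding AL_shattered_def by blast

lemma AL_shattered_width_0: "AL_shattered V 0 d t \<longleftrightarrow> V \<noteq> {}"
proof -
  have "AL_path 0 d \<sigma> \<longleftrightarrow> \<sigma> = []" for \<sigma>
    by (cases \<sigma>) (auto simp: AL_path_iff AL_partial_path_def internal_node_def)
  then show ?thesis by (auto simp: AL_shattered_iff path_consistent_def)
qed

lemma AL_shattered_depth_0: "V \<noteq> {} \<Longrightarrow> AL_shattered V w 0 t"
  unfolding AL_shattered_def AL_path_def internal_node_def by auto

lemma L_shattered_iff_AL_shattered: "L_shattered H d t \<longleftrightarrow> AL_shattered H d d t"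
proof -
  have "AL_path d d \<sigma> \<longleftrightarrow> length \<sigma> = d" for \<sigma>
  proof
    assume "AL_path d d \<sigma>"
    moreover have "length (filter id \<sigma>) \<le> length \<sigma>" by (rule length_filter_le)
    ultimately show "length \<sigma> = d"
      using AL_partial_path_length_le by (fastforce simp: AL_path_iff internal_node_def)
  next
    assume len: "length \<sigma> = d"
    have "length (filter id (take i \<sigma>)) < d" if "i < d" for i
      using length_filter_le[of id "take i \<sigma>"] that by simp
    then show "AL_path d d \<sigma>"
      using len by (simp add: AL_path_iff AL_partial_path_def internal_node_def)
  qed
  then show ?thesis by (simp add: L_shattered_def AL_shattered_def)
qed

lemma enat_le_Sup_downclosed:
  assumes le: "enat D \<le> Sup {enat d | d. P d}" and base: "P 0 \<or> 0 < D"
    and down: "\<And>d d'. P d \<Longrightarrow> d' \<le> d \<Longrightarrow> P d'"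
  shows "P D"
proof (cases D)
  case (Suc D')
  then have "enat D' < Sup {enat d | d. P d}" using le by (simp add: Suc_ile_eq)
  then obtain d where "P d" "D' < d" by (auto simp: less_Sup_iff)
  then show ?thesis using Suc down by (metis Suc_leI)
qed (use base in auto)

lemma AL_shattered_if_le_AL_dim:
  assumes "enat D \<le> AL_dim w V" "V \<noteq> {} \<or> 0 < D"
  obtains t where "AL_shattered V w D t"
proof -
  have "\<exists>t. AL_shattered V w D t"
    using assms(1) unfolding AL_dim_def
    by (rule enat_le_Sup_downclosed[where P = "\<lambda>d. \<exists>t. AL_shattered V w d t"])
      (use assms(2) in \<open>auto intro: AL_shattered_depth_0 AL_shattered_antimono\<close>)
  then show ?thesis using that by blast
qed

lemma L_shattered_if_le_L_dim:
  assumes "enat D \<le> L_dim H" "0 < D"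
  obtains t where "L_shattered H D t"
proof -
  have "\<exists>t. L_shattered H D t"
    using assms(1) unfolding L_dim_def
    by (rule enat_le_Sup_downclosed[where P = "\<lambda>d. \<exists>t. L_shattered H d t"])
      (use assms(2) in \<open>auto simp: L_shattered_iff_AL_shattered intro: AL_shattered_antimono\<close>)
  then show ?thesis using that by blast
qed

lemma le_AL_dim: "AL_shattered V w d t \<Longrightarrow> enat d \<le> AL_dim w V"
  unfolding AL_dim_def by (rule Sup_upper) blast

lemma AL_dim_mono: "V \<subseteq> V' \<Longrightarrow> AL_dim w V \<le> AL_dim w V'"
  unfolding AL_dim_def by (intro Sup_subset_mono) (blast intro: AL_shattered_subset_mono)

lemma AL_dim_width_0:
  assumes "V \<noteq> {}"
  shows "AL_dim 0 V = \<infinity>"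
proof (cases "AL_dim 0 V")
  case (enat k)
  have "enat (Suc k) \<le> AL_dim 0 V"
    using assms by (intro le_AL_dim[of _ _ _ undefined]) (simp add: AL_shattered_width_0)
  then show ?thesis using enat by simp
qed

definition graft :: "'x \<Rightarrow> (bool list \<Rightarrow> 'x) \<Rightarrow> (bool list \<Rightarrow> 'x) \<Rightarrow> bool list \<Rightarrow> 'x" where
  "graft x t0 t1 u = (case u of [] \<Rightarrow> x | c # u' \<Rightarrow> if c then t1 u' else t0 u')"

lemma path_consistent_graft:
  "path_consistent (graft x t0 t1) (c # \<tau>) h \<longleftrightarrow> h x = c \<and> path_consistent (if c then t1 else t0) \<tau> h"
  by (auto simp: path_consistent_def graft_def less_Suc_eq_0_disj)

lemma AL_path_Cons:
  assumes "1 \<le> w"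
  shows "AL_path w (Suc d) (c # \<tau>) \<longleftrightarrow> AL_path (if c then w - 1 else w) d \<tau>"
proof -
  have "internal_node w (Suc d) (c # u) \<longleftrightarrow> internal_node (if c then w - 1 else w) d u" for u
    using assms by (auto simp: internal_node_def)
  moreover have "internal_node w (Suc d) []" using assms by (simp add: internal_node_def)
  ultimately show ?thesis by (auto simp: AL_path_def less_Suc_eq_0_disj)
qed

lemma AL_shattered_graft:
  assumes t0: "AL_shattered {f\<in>V. \<not> f x} b D t0" and t1: "AL_shattered {f\<in>V. f x} (b - 1) D t1"
    and b: "1 \<le> b"
  shows "AL_shattered V b (Suc D) (graft x t0 t1)"
  unfolding AL_shattered_iff
proof (intro allI impI)
  fix \<sigma> assume \<sigma>: "AL_path b (Suc D) \<sigma>"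
  have "\<not> AL_path b (Suc D) []" using b by (simp add: AL_path_def internal_node_def)
  with \<sigma> obtain c \<tau> where c\<tau>: "\<sigma> = c # \<tau>" by (cases \<sigma>) auto
  with \<sigma> have \<tau>: "AL_path (if c then b - 1 else b) D \<tau>" using AL_path_Cons[OF b] by simp
  have "\<exists>h\<in>{f\<in>V. f x = c}. path_consistent (if c then t1 else t0) \<tau> h"
  proof (cases c)
    case True
    then show ?thesis using t1 \<tau> unfolding AL_shattered_iff by simp
  next
    case False
    then show ?thesis using t0 \<tau> unfolding AL_shattered_iff by simp
  qed
  then obtain h where "h \<in> V" "h x = c" "path_consistent (if c then t1 else t0) \<tau> h" by blast
  then have "path_consistent (graft x t0 t1) \<sigma> h"
    unfolding c\<tau> path_consistent_graft by (intro conjI)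
  then show "\<exists>h\<in>V. path_consistent (graft x t0 t1) \<sigma> h"
    using \<open>h \<in> V\<close> by blast
qed

lemma AL_dim_one_side_lt:
  assumes D: "AL_dim b V = enat D" and b: "1 \<le> b"
    and zero_side: "{f\<in>V. \<not> f x} \<noteq> {}" "\<not> AL_dim b {f\<in>V. \<not> f x} < AL_dim b V"
    and one_side: "{f\<in>V. f x} \<noteq> {}"
  shows "AL_dim (b - 1) {f\<in>V. f x} < AL_dim b V"
proof (rule ccontr)
  assume "\<not> ?thesis"
  then have "enat D \<le> AL_dim (b - 1) {f\<in>V. f x}" using D by (simp add: not_less)
  then obtain t1 where "AL_shattered {f\<in>V. f x} (b - 1) D t1"
    by (rule AL_shattered_if_le_AL_dim) (use one_side in auto)
  have "enat D \<le> AL_dim b {f\<in>V. \<not> f x}" using zero_side(2) D by (simp add: not_less)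
  then obtain t0 where "AL_shattered {f\<in>V. \<not> f x} b D t0"
    by (rule AL_shattered_if_le_AL_dim) (use zero_side(1) in auto)
  then have "enat (Suc D) \<le> AL_dim b V"
    using \<open>AL_shattered {f\<in>V. f x} (b - 1) D t1\<close> b by (blast intro: le_AL_dim AL_shattered_graft)
  then show False using D by simp
qed

lemma AL_dim_subset_enat:
  assumes "V' \<subseteq> V" "AL_dim b V = enat D"
  obtains D' where "AL_dim b V' = enat D'" "D' \<le> D"
  using AL_dim_mono[OF assms(1), of b] assms(2) by (cases "AL_dim b V'") auto

lemma eff_width_enat:
  assumes "eff_width H = enat W"
  shows "1 \<le> W" "AL_dim W H < \<infinity>" "\<And>k. 1 \<le> k \<Longrightarrow> k < W \<Longrightarrow> AL_dim k H = \<infinity>"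
proof -
  have ex: "\<exists>w\<ge>1. AL_dim w H < \<infinity>" using assms by (auto simp: eff_width_def split: if_splits)
  then have W: "W = (LEAST w. 1 \<le> w \<and> AL_dim w H < \<infinity>)" using assms by (simp add: eff_width_def)
  show "1 \<le> W" "AL_dim W H < \<infinity>" unfolding W by (rule LeastI2_ex[OF ex]; simp)+
  show "AL_dim k H = \<infinity>" if "1 \<le> k" "k < W" for k
    using not_less_Least[of k "\<lambda>w. 1 \<le> w \<and> AL_dim w H < \<infinity>"] that W by (auto simp: top_unique)
qed

lemma eff_width_infinity:
  assumes "eff_width H = \<infinity>" "1 \<le> w"
  shows "AL_dim w H = \<infinity>"
proof -
  have "\<not> (\<exists>w\<ge>1. AL_dim w H < \<infinity>)"
    using assms(1) unfolding eff_width_def by (metis enat.distinct(1))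
  then show ?thesis using assms(2) by (simp add: not_less)
qed

section \<open>The upper bound\<close>

definition zero_side_small :: "('x \<Rightarrow> bool) set \<Rightarrow> nat \<Rightarrow> 'x \<Rightarrow> bool" where
  "zero_side_small V b x \<longleftrightarrow> {f\<in>V. \<not> f x} = {} \<or> AL_dim b {f\<in>V. \<not> f x} < AL_dim b V"

fun soa_update :: "('x \<Rightarrow> bool) set \<times> nat \<Rightarrow> 'x \<times> bool option \<Rightarrow> ('x \<Rightarrow> bool) set \<times> nat" where
  "soa_update (V, b) (x, None) = (V, b)"
| "soa_update (V, b) (x, Some y) =
     (if y \<and> \<not> zero_side_small V b x then ({f\<in>V. f x}, b - 1) else ({f\<in>V. f x = y}, b))"

definition soa_state :: "('x \<Rightarrow> bool) set \<Rightarrow> nat \<Rightarrow> 'x history \<Rightarrow> ('x \<Rightarrow> bool) set \<times> nat" where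
  "soa_state H w hist = foldl soa_update (H, w) hist"

definition apple_soa :: "('x \<Rightarrow> bool) set \<Rightarrow> nat \<Rightarrow> real \<Rightarrow> 'x learner" where
  "apple_soa H w p hist x = (case soa_state H w hist of (V, b) \<Rightarrow>
     if zero_side_small V b x then return_pmf True else bernoulli_pmf p)"

lemma soa_state_snoc: "soa_state H w (hist @ [e]) = soa_update (soa_state H w hist) e"
  by (simp add: soa_state_def)

lemma pmf_apple_soa_True:
  assumes "soa_state H w hist = (V, b)" "0 \<le> p" "p \<le> 1"
  shows "pmf (apple_soa H w p hist x) True = (if zero_side_small V b x then 1 else p)"
  using assms by (simp add: apple_soa_def)

lemma soa_update_revealed:
  assumes h: "h \<in> V" and b: "1 \<le> b" and D: "AL_dim b V = enat D"
  obtains V' b' D' where "soa_update (V, b) (x, Some (h x)) = (V', b')" "h \<in> V'"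
    "AL_dim b' V' = enat D'" "D' \<le> D"
    "zero_side_small V b x \<Longrightarrow> \<not> h x \<Longrightarrow> D' < D \<and> b' = b"
    "\<not> zero_side_small V b x \<Longrightarrow> h x \<Longrightarrow> D' < D \<and> b' = b - 1 \<and> 2 \<le> b"
    "\<not> zero_side_small V b x \<Longrightarrow> \<not> h x \<Longrightarrow> b' = b"
    "zero_side_small V b x \<Longrightarrow> b' = b"
proof (cases "\<not> zero_side_small V b x \<and> h x")
  case True
  have lt: "AL_dim (b - 1) {f\<in>V. f x} < enat D"
    using AL_dim_one_side_lt[OF D b] True h D by (auto simp: zero_side_small_def)
  have "2 \<le> b"
  proof (rule ccontr)
    assume "\<not> 2 \<le> b"
    then have "AL_dim (b - 1) {f\<in>V. f x} = \<infinity>"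
      using b h True AL_dim_width_0[of "{f\<in>V. f x}"] by force
    then show False using lt by simp
  qed
  moreover obtain D' where "AL_dim (b - 1) {f\<in>V. f x} = enat D'" "D' < D"
    using lt by (cases "AL_dim (b - 1) {f\<in>V. f x}") auto
  ultimately show ?thesis using True h by (intro that[of "{f\<in>V. f x}" "b - 1" D']) auto
next
  case False
  obtain D' where D': "AL_dim b {f\<in>V. f x = h x} = enat D'" "D' \<le> D"
    using AL_dim_subset_enat[of "{f\<in>V. f x = h x}" V b D] D by blast
  have "D' < D" if "zero_side_small V b x" "\<not> h x"
    using that h D D' by (auto simp: zero_side_small_def)
  then show ?thesis using False h D' by (intro that[of "{f\<in>V. f x = h x}" b D']) auto
qed

text \<open>The learner predicts 1 surely if s holds and with probability p otherwise; y is the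
  label, and \<Phi>, \<Phi>' are the potentials before and after it is revealed.\<close>
lemma potential_round:
  fixes p q \<Phi> \<Phi>' :: real
  assumes p: "0 \<le> p" "p \<le> 1" and q: "q = (if s then 1 else p)" and "\<Phi>' \<le> \<Phi>"
    and "s \<Longrightarrow> \<not> y \<Longrightarrow> \<Phi>' + 1 \<le> \<Phi>" and "\<not> s \<Longrightarrow> y \<Longrightarrow> p * \<Phi>' + 1 \<le> p * \<Phi>"
  shows "q * (of_bool (\<not> y) + \<Phi>') + (1 - q) * (of_bool y + \<Phi>) \<le> \<Phi> + p"
proof -
  have "p * \<Phi>' \<le> p * \<Phi>" using assms by (simp add: mult_left_mono)
  then show ?thesis using assms by (cases s; cases y) (auto simp: algebra_simps)
qed

lemma soa_update_potential:
  fixes p :: real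
  assumes h: "h \<in> V" and b: "1 \<le> b" and D: "AL_dim b V = enat D"
    and p: "0 \<le> p" "p \<le> 1" "2 \<le> b \<longrightarrow> 0 < p"
    and q: "q = (if zero_side_small V b x then 1 else p)"
  obtains V' b' D' where "soa_update (V, b) (x, Some (h x)) = (V', b')"
    "h \<in> V'" "1 \<le> b'" "b' \<le> b" "AL_dim b' V' = enat D'"
    "q * (of_bool (\<not> h x) + (D' + real (b' - 1) / p)) + (1 - q) * (of_bool (h x) + (D + real (b - 1) / p))
       \<le> D + real (b - 1) / p + p"
proof -
  obtain V' b' D' where upd: "soa_update (V, b) (x, Some (h x)) = (V', b')" "h \<in> V'"
    "AL_dim b' V' = enat D'" "D' \<le> D"
    and cases: "zero_side_small V b x \<Longrightarrow> \<not> h x \<Longrightarrow> D' < D \<and> b' = b"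
    "\<not> zero_side_small V b x \<Longrightarrow> h x \<Longrightarrow> D' < D \<and> b' = b - 1 \<and> 2 \<le> b"
    "\<not> zero_side_small V b x \<Longrightarrow> \<not> h x \<Longrightarrow> b' = b" "zero_side_small V b x \<Longrightarrow> b' = b"
    using soa_update_revealed[OF h b D] by metis
  have b': "1 \<le> b'" "b' \<le> b" using b cases by (cases "zero_side_small V b x"; cases "h x"; force)+
  have charged: "p * (D' + real (b' - 1) / p) + 1 \<le> p * (D + real (b - 1) / p)"
    if "\<not> zero_side_small V b x" "h x"
  proof -
    have "D' < D" "b' = b - 1" "2 \<le> b" "0 < p" using cases(2)[OF that] p by auto
    moreover from this have "p * D' \<le> p * D" by simp
    ultimately show ?thesis by (simp add: distrib_left)
  qed
  have "q * (of_bool (\<not> h x) + (D' + real (b' - 1) / p)) + (1 - q) * (of_bool (h x) + (D + real (b - 1) / p))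
      \<le> D + real (b - 1) / p + p"
  proof (rule potential_round[OF p(1,2) q])
    show "D' + real (b' - 1) / p \<le> D + real (b - 1) / p"
      using upd(4) b'(2) p by (intro add_mono divide_right_mono) auto
  qed (use cases(1) charged in auto)
  then show ?thesis using upd b' by (intro that) auto
qed

lemma apple_soa_loss_le:
  fixes p :: real
  assumes "soa_state H w hist = (V, b)" "h \<in> V" "1 \<le> b" "AL_dim b V = enat D" "2 \<le> b \<longrightarrow> 0 < p"
    and p: "0 \<le> p" "p \<le> 1"
  shows "loss (apple_soa H w p) h xs hist \<le> D + real (b - 1) / p + p * length xs"
  using assms(1-5)
proof (induction xs arbitrary: hist V b D)
  case Nil
  then show ?case using p by simp
next
  case (Cons x xs)
  let ?A = "apple_soa H w p" and ?n = "real (length xs)"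
  define q where "q = (if zero_side_small V b x then 1 else p)"
  have q: "pmf (?A hist x) True = q" "0 \<le> q" "q \<le> 1"
    using pmf_apple_soa_True[OF Cons.prems(1) p] p by (auto simp: q_def)
  obtain V' b' D' where upd: "soa_update (V, b) (x, Some (h x)) = (V', b')"
    and V': "h \<in> V'" "1 \<le> b'" "b' \<le> b" "AL_dim b' V' = enat D'"
    and potential: "q * (of_bool (\<not> h x) + (D' + real (b' - 1) / p))
        + (1 - q) * (of_bool (h x) + (D + real (b - 1) / p)) \<le> D + real (b - 1) / p + p"
    using soa_update_potential[OF Cons.prems(2-4) p Cons.prems(5) q_def] by blast
  have "soa_state H w (hist @ [(x, Some (h x))]) = (V', b')"
    by (simp only: soa_state_snoc Cons.prems(1) upd)
  then have revealed: "loss ?A h xs (hist @ [(x, Some (h x))]) \<le> D' + real (b' - 1) / p + p * ?n"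
    using V' Cons.prems(5) by (intro Cons.IH) auto
  have hidden: "loss ?A h xs (hist @ [(x, None)]) \<le> D + real (b - 1) / p + p * ?n"
    using Cons.prems by (intro Cons.IH) (auto simp: soa_state_snoc)
  have "loss ?A h (x # xs) hist
      \<le> q * (of_bool (\<not> h x) + (D' + real (b' - 1) / p + p * ?n))
        + (1 - q) * (of_bool (h x) + (D + real (b - 1) / p + p * ?n))"
    unfolding loss_Cons q(1) using q revealed hidden by (intro add_mono mult_left_mono) auto
  also have "\<dots> = q * (of_bool (\<not> h x) + (D' + real (b' - 1) / p))
        + (1 - q) * (of_bool (h x) + (D + real (b - 1) / p)) + p * ?n"
    by (simp add: algebra_simps)
  also have "\<dots> \<le> D + real (b - 1) / p + p * length (x # xs)"
    using potential by (simp add: algebra_simps)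
  finally show ?case .
qed

lemma sqrt_balance:
  fixes a T :: real
  assumes "0 \<le> a" "0 < T"
  shows "sqrt (a / T) * T + a / sqrt (a / T) = 2 * sqrt (a * T)"
proof (cases "a = 0")
  case False
  then have s: "0 < sqrt a" "0 < sqrt T" using assms by auto
  have "sqrt (a / T) * T + a / sqrt (a / T)
      = sqrt a / sqrt T * (sqrt T * sqrt T) + (sqrt a * sqrt a) / (sqrt a / sqrt T)"
    using assms by (simp add: real_sqrt_divide)
  also have "\<dots> = 2 * (sqrt a * sqrt T)" using s by (simp add: field_simps)
  finally show ?thesis by (simp add: real_sqrt_mult)
qed simp

lemma exists_learner_M_le:
  fixes H :: "('x \<Rightarrow> bool) set"
  assumes w: "1 \<le> w" and d: "AL_dim w H = enat d" and T: "1 \<le> T"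
  obtains A where "M A T H \<le> ennreal (d + 2 * sqrt ((real w - 1) * T))"
proof (cases "real w - 1 \<le> T")
  case False
  have "M (apple_soa H w 0) T H \<le> ennreal (d + 2 * sqrt ((real w - 1) * T))"
  proof (rule M_le_ennrealI)
    fix h and xs :: "'x list" assume "length xs = T"
    then have "loss (apple_soa H w 0) h xs [] \<le> sqrt (real T * T)"
      using loss_le_length[of "apple_soa H w 0" h xs "[]"] by simp
    also have "\<dots> \<le> sqrt ((real w - 1) * T)"
      using False by (intro real_sqrt_le_mono mult_right_mono) auto
    also have "\<dots> \<le> d + 2 * sqrt ((real w - 1) * T)" using w by simp
    finally show "loss (apple_soa H w 0) h xs [] \<le> d + 2 * sqrt ((real w - 1) * T)" .
  qed
  then show ?thesis by (rule that)
next
  case True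
  define p where "p = sqrt ((real w - 1) / T)"
  have p: "0 \<le> p" "p \<le> 1" "2 \<le> w \<longrightarrow> 0 < p" using w T True by (auto simp: p_def)
  have balance: "p * T + real (w - 1) / p = 2 * sqrt ((real w - 1) * T)"
    using sqrt_balance[of "real w - 1" T] w T by (simp add: p_def mult.commute)
  have "M (apple_soa H w p) T H \<le> ennreal (d + 2 * sqrt ((real w - 1) * T))"
  proof (rule M_le_ennrealI)
    fix h and xs :: "'x list" assume "h \<in> H" "length xs = T"
    then have "loss (apple_soa H w p) h xs [] \<le> d + real (w - 1) / p + p * T"
      using apple_soa_loss_le[of H w "[]" H w h d p xs] w d p by (simp add: soa_state_def)
    then show "loss (apple_soa H w p) h xs [] \<le> d + 2 * sqrt ((real w - 1) * T)"
      using balance by simp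
  qed
  then show ?thesis by (rule that)
qed


lemma INF_M_le:
  fixes H :: "('x \<Rightarrow> bool) set"
  assumes "1 \<le> T"
  shows "(INF A :: 'x learner. M A T H)
    \<le> (case eff_width H of enat w \<Rightarrow> ennreal_of_enat (AL_dim w H) + 2 * sqrt_term H T | \<infinity> \<Rightarrow> \<infinity>)"
proof (cases "eff_width H")
  case (enat W)
  then obtain d where W: "1 \<le> W" "AL_dim W H = enat d"
    using eff_width_enat[OF enat] by (cases "AL_dim W H") auto
  obtain A :: "'x learner" where "M A T H \<le> ennreal (d + 2 * sqrt ((real W - 1) * T))"
    using exists_learner_M_le[OF W assms] .
  also have "\<dots> = ennreal_of_enat (AL_dim W H) + 2 * sqrt_term H T"
    using W by (simp add: enat sqrt_term_def ennreal_mult ennreal_of_nat_eq_real_of_nat)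
  finally show ?thesis by (simp add: enat INF_lower2)
qed simp

section \<open>The lower bound\<close>

lemma plays_append: "plays (xs @ ys) a = plays xs (plays ys a)"
  by (induction xs a rule: plays.induct) auto

lemma outcomes_plays: "outcomes (plays pre a) = (\<lambda>zs. pre @ zs) ` outcomes a"
  by (induction pre a rule: plays.induct) (auto simp: image_image)

lemma unit_weights_plays [simp]: "unit_weights (plays zs a) = unit_weights a"
  by (induction zs a rule: plays.induct) auto

lemma adv_loss_plays_Mix:
  "adv_loss A (plays pre (Mix \<alpha> a b)) hist
     = \<alpha> * adv_loss A (plays pre a) hist + (1 - \<alpha>) * adv_loss A (plays pre b) hist"
proof (induction pre arbitrary: hist)
  case (Cons z pre)
  obtain x y where z: "z = (x, y)" by (cases z)
  show ?case by (simp add: z Cons.IH algebra_simps)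
qed simp

lemma exists_outcome_adv_loss_ge:
  assumes "unit_weights a"
  shows "\<exists>zs\<in>outcomes a. adv_loss A (plays pre a) hist \<le> adv_loss A (plays (pre @ zs) Stop) hist"
  using assms
proof (induction a arbitrary: pre)
  case (Play x y a)
  then obtain zs where "zs \<in> outcomes a"
    "adv_loss A (plays (pre @ [(x, y)]) a) hist \<le> adv_loss A (plays ((pre @ [(x, y)]) @ zs) Stop) hist"
    by fastforce
  then show ?case by (auto simp: plays_append)
next
  case (Mix \<alpha> a b)
  obtain zs1 where zs1: "zs1 \<in> outcomes a"
    "adv_loss A (plays pre a) hist \<le> adv_loss A (plays (pre @ zs1) Stop) hist"
    using Mix by fastforce
  obtain zs2 where zs2: "zs2 \<in> outcomes b"
    "adv_loss A (plays pre b) hist \<le> adv_loss A (plays (pre @ zs2) Stop) hist"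
    using Mix by fastforce
  let ?l1 = "adv_loss A (plays (pre @ zs1) Stop) hist" and ?l2 = "adv_loss A (plays (pre @ zs2) Stop) hist"
  have "adv_loss A (plays pre (Mix \<alpha> a b)) hist \<le> max ?l1 ?l2"
    unfolding adv_loss_plays_Mix using Mix.prems zs1 zs2 by (intro convex_comb_le) auto
  then show ?case using zs1 zs2 by (auto simp: max_def split: if_splits)
qed simp

lemma adv_loss_plays_ge:
  assumes "\<And>hist. c \<le> adv_loss A a hist"
  shows "c \<le> adv_loss A (plays pre a) hist"
proof (induction pre arbitrary: hist)
  case (Cons z pre)
  obtain x y where z: "z = (x, y)" by (cases z)
  show ?case
    unfolding z plays.simps adv_loss.simps
    by (rule convex_comb_ge) (auto simp: pmf_le_1 intro!: add_increasing Cons)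
qed (simp add: assms)

text \<open>The learner cannot tell the two branches apart before it predicts 1 on x: every
  round in which it predicts 0 costs \<alpha> in expectation, and its first prediction of 1 costs
  1 - \<alpha>.\<close>
lemma adv_loss_repeat_Mix:
  assumes c1: "\<And>hist. c1 \<le> adv_loss A a1 hist" and c0: "\<And>hist. c0 \<le> adv_loss A a0 hist"
    and \<alpha>: "0 \<le> \<alpha>" "\<alpha> \<le> 1"
  shows "\<alpha> * c1 + (1 - \<alpha>) * c0 + min (1 - \<alpha>) (\<alpha> * n)
     \<le> \<alpha> * adv_loss A (plays (replicate n (x, True)) a1) hist
       + (1 - \<alpha>) * adv_loss A (plays (replicate n (x, False)) a0) hist"
proof (induction n arbitrary: hist)
  case 0
  show ?case using c1 c0 \<alpha> by (simp, intro add_mono mult_left_mono) auto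
next
  case (Suc n)
  let ?q = "pmf (A hist x) True"
  let ?base = "\<alpha> * c1 + (1 - \<alpha>) * c0 + min (1 - \<alpha>) (\<alpha> * Suc n)"
  let ?rep = "\<lambda>c a hist'. adv_loss A (plays (replicate n (x, c)) a) hist'"
  have predict_1: "?base \<le> \<alpha> * ?rep True a1 (hist @ [(x, Some True)])
      + (1 - \<alpha>) * (1 + ?rep False a0 (hist @ [(x, Some False)]))"
  proof -
    have "\<alpha> * c1 \<le> \<alpha> * ?rep True a1 (hist @ [(x, Some True)])"
      using \<alpha> by (intro mult_left_mono adv_loss_plays_ge c1) auto
    moreover have "(1 - \<alpha>) * (c0 + 1) \<le> (1 - \<alpha>) * (1 + ?rep False a0 (hist @ [(x, Some False)]))"
      using \<alpha> by (intro mult_left_mono) (auto intro: adv_loss_plays_ge c0)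
    moreover have "min (1 - \<alpha>) (\<alpha> * Suc n) \<le> 1 - \<alpha>" by simp
    ultimately show ?thesis by (simp add: algebra_simps)
  qed
  have predict_0: "?base \<le> \<alpha> + \<alpha> * ?rep True a1 (hist @ [(x, None)])
      + (1 - \<alpha>) * ?rep False a0 (hist @ [(x, None)])"
  proof -
    have "min (1 - \<alpha>) (\<alpha> * Suc n) \<le> \<alpha> + min (1 - \<alpha>) (\<alpha> * n)"
      using \<alpha> by (auto simp: min_def algebra_simps)
    then show ?thesis using Suc[of "hist @ [(x, None)]"] by linarith
  qed
  have "?base \<le> ?q * (\<alpha> * ?rep True a1 (hist @ [(x, Some True)])
        + (1 - \<alpha>) * (1 + ?rep False a0 (hist @ [(x, Some False)])))
      + (1 - ?q) * (\<alpha> + \<alpha> * ?rep True a1 (hist @ [(x, None)])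
        + (1 - \<alpha>) * ?rep False a0 (hist @ [(x, None)]))"
    using predict_1 predict_0 by (rule convex_comb_ge[rotated 2]) (simp_all add: pmf_le_1)
  also have "\<dots> = \<alpha> * adv_loss A (plays (replicate (Suc n) (x, True)) a1) hist
      + (1 - \<alpha>) * adv_loss A (plays (replicate (Suc n) (x, False)) a0) hist"
    by (simp add: algebra_simps)
  finally show ?case .
qed

text \<open>One phase of the adversary walks down the zero edges of the tree t from u for at
  most r nodes, presenting each node m times and taking its one edge with probability \<alpha>.\<close>
primrec phase :: "(bool list \<Rightarrow> 'x) \<Rightarrow> nat \<Rightarrow> real \<Rightarrow> nat \<Rightarrow> (bool list \<Rightarrow> 'x adversary)
    \<Rightarrow> bool list \<Rightarrow> 'x adversary" where
  "phase t m \<alpha> 0 N u = N u"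
| "phase t m \<alpha> (Suc r) N u = Mix \<alpha> (plays (replicate m (t u, True)) (N (u @ [True])))
                                 (plays (replicate m (t u, False)) (phase t m \<alpha> r N (u @ [False])))"

primrec phases :: "(bool list \<Rightarrow> 'x) \<Rightarrow> nat \<Rightarrow> real \<Rightarrow> nat \<Rightarrow> bool list \<Rightarrow> 'x adversary" where
  "phases t m \<alpha> 0 u = Stop"
| "phases t m \<alpha> (Suc p) u = phase t m \<alpha> m (phases t m \<alpha> p) u"

lemma unit_weights_phases: "0 \<le> \<alpha> \<Longrightarrow> \<alpha> \<le> 1 \<Longrightarrow> unit_weights (phases t m \<alpha> p u)"
proof (induction p arbitrary: u)
  case (Suc p)
  have "unit_weights (phase t m \<alpha> r (phases t m \<alpha> p) u)" for r u
    using Suc by (induction r arbitrary: u) auto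
  then show ?case by simp
qed simp

lemma adv_loss_phase_ge:
  assumes m: "1 \<le> m" and \<alpha>: "\<alpha> = 1 / (2 * real m)" and N: "\<And>v hist. c \<le> adv_loss A (N v) hist"
  shows "r \<le> m \<Longrightarrow> c + r / 3 \<le> adv_loss A (phase t m \<alpha> r N u) hist"
proof (induction r arbitrary: u hist)
  case (Suc r)
  have \<alpha>1: "0 \<le> \<alpha>" "\<alpha> \<le> 1" using \<alpha> m by auto
  have "\<alpha> * c + (1 - \<alpha>) * (c + r / 3) + min (1 - \<alpha>) (\<alpha> * m)
     \<le> adv_loss A (phase t m \<alpha> (Suc r) N u) hist"
    using adv_loss_repeat_Mix[OF N _ \<alpha>1, of "c + r / 3" "phase t m \<alpha> r N (u @ [False])"] Suc by simp
  moreover have "c + Suc r / 3 \<le> \<alpha> * c + (1 - \<alpha>) * (c + r / 3) + min (1 - \<alpha>) (\<alpha> * m)"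
  proof -
    have "\<alpha> * m = 1 / 2" using \<alpha> m by simp
    moreover have "\<alpha> * r \<le> \<alpha> * m" "\<alpha> * 1 \<le> \<alpha> * m"
      using \<alpha>1 m Suc.prems by (intro mult_left_mono; simp)+
    moreover have "\<alpha> * c + (1 - \<alpha>) * (c + r / 3) = c + r / 3 - \<alpha> * r / 3"
      by (simp add: field_simps)
    ultimately show ?thesis by (simp add: min_def)
  qed
  ultimately show ?case by linarith
qed (simp add: N)

lemma adv_loss_phases_ge:
  assumes "1 \<le> m" "\<alpha> = 1 / (2 * real m)"
  shows "real m * p / 3 \<le> adv_loss A (phases t m \<alpha> p u) hist"
proof (induction p arbitrary: u hist)
  case (Suc p)
  have "real m * p / 3 + m / 3 \<le> adv_loss A (phase t m \<alpha> m (phases t m \<alpha> p) u) hist"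
    by (rule adv_loss_phase_ge[OF assms]) (use Suc in auto)
  then show ?case by (simp add: algebra_simps add_divide_distrib)
qed simp

fun repeat_path :: "(bool list \<Rightarrow> 'x) \<Rightarrow> nat \<Rightarrow> bool list \<Rightarrow> bool list \<Rightarrow> ('x \<times> bool) list" where
  "repeat_path t m u [] = []"
| "repeat_path t m u (c # v) = replicate m (t u, c) @ repeat_path t m (u @ [c]) v"

lemma repeat_path_append:
  "repeat_path t m u (v @ v') = repeat_path t m u v @ repeat_path t m (u @ v) v'"
  by (induction v arbitrary: u) auto

lemma length_repeat_path [simp]: "length (repeat_path t m u v) = m * length v"
  by (induction v arbitrary: u) auto

lemma path_consistent_repeat_path:
  assumes "path_consistent t (u @ v) h" "(x, y) \<in> set (repeat_path t m u v)"
  shows "h x = y"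
  using assms
proof (induction v arbitrary: u)
  case (Cons c v)
  have "length u < length (u @ c # v)" by simp
  then have "h (t (take (length u) (u @ c # v))) = (u @ c # v) ! length u"
    using Cons.prems(1) unfolding path_consistent_def by blast
  then have hu: "h (t u) = c" by simp
  have pc: "path_consistent t ((u @ [c]) @ v) h" using Cons.prems(1) by simp
  from Cons.prems(2) consider "(x, y) = (t u, c)" | "(x, y) \<in> set (repeat_path t m (u @ [c]) v)"
    by (cases "m = 0") auto
  then show ?case
  proof cases
    case 1
    then show ?thesis using hu by simp
  next
    case 2
    then show ?thesis using Cons.IH[OF pc] by blast
  qed
qed simp

definition phase_steps :: "nat \<Rightarrow> bool list set" where
  "phase_steps r = insert (replicate r False) ((\<lambda>j. replicate j False @ [True]) ` {..<r})"

lemma phase_steps_Suc: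
  assumes "v \<in> phase_steps r"
  shows "False # v \<in> phase_steps (Suc r)"
proof -
  consider "v = replicate r False" | j where "j < r" "v = replicate j False @ [True]"
    using assms by (auto simp: phase_steps_def)
  then show ?thesis
  proof cases
    case 2
    then have "False # v = replicate (Suc j) False @ [True]" "Suc j < Suc r" by simp_all
    then show ?thesis unfolding phase_steps_def by blast
  qed (simp add: phase_steps_def)
qed

lemma outcomes_phase:
  assumes "zs \<in> outcomes (phase t m \<alpha> r N u)"
  obtains v zs' where "v \<in> phase_steps r" "zs = repeat_path t m u v @ zs'" "zs' \<in> outcomes (N (u @ v))"
  using assms
proof (induction r arbitrary: u zs)
  case 0
  then show ?case by (auto simp: phase_steps_def)
next
  case (Suc r)
  from Suc.prems(2) consider
      (one) zs' where "zs = replicate m (t u, True) @ zs'" "zs' \<in> outcomes (N (u @ [True]))"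
    | (zero) zs' where "zs = replicate m (t u, False) @ zs'" "zs' \<in> outcomes (phase t m \<alpha> r N (u @ [False]))"
    by (auto simp: outcomes_plays)
  then show ?case
  proof cases
    case one
    then show ?thesis by (intro Suc.prems(1)[of "[True]"]) (auto simp: phase_steps_def)
  next
    case zero
    show ?thesis
    proof (rule Suc.IH[OF _ zero(2)])
      fix v zs'' assume "v \<in> phase_steps r" "zs' = repeat_path t m (u @ [False]) v @ zs''"
        "zs'' \<in> outcomes (N ((u @ [False]) @ v))"
      then show thesis
        using zero(1) by (intro Suc.prems(1)[of "False # v" zs'']) (auto intro: phase_steps_Suc)
    qed
  qed
qed

lemma AL_partial_path_phase_step:
  assumes "v \<in> phase_steps m"
  shows "AL_partial_path (Suc p) (Suc p * m) v" "length (filter id v) \<le> 1" "length v \<le> m"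
proof -
  have "take i v = replicate i False" "i < m" if "i < length v" for i
    using assms that by (auto simp: phase_steps_def)
  then show "AL_partial_path (Suc p) (Suc p * m) v"
    by (auto simp: AL_partial_path_def internal_node_def intro: trans_less_add1)
  show "length (filter id v) \<le> 1" "length v \<le> m"
    using assms by (auto simp: phase_steps_def)
qed

lemma outcomes_phases:
  assumes "zs \<in> outcomes (phases t m \<alpha> p u)"
  shows "\<exists>v. AL_partial_path p (p * m) v \<and> zs = repeat_path t m u v"
  using assms
proof (induction p arbitrary: u zs)
  case 0
  then show ?case by (auto simp: AL_partial_path_def intro: exI[of _ "[]"])
next
  case (Suc p)
  have "zs \<in> outcomes (phase t m \<alpha> m (phases t m \<alpha> p) u)" using Suc.prems by simp
  then obtain v zs' where v: "v \<in> phase_steps m" "zs = repeat_path t m u v @ zs'"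
    and zs': "zs' \<in> outcomes (phases t m \<alpha> p (u @ v))"
    by (rule outcomes_phase)
  obtain v' where v': "AL_partial_path p (p * m) v'" "zs' = repeat_path t m (u @ v) v'"
    using Suc.IH[OF zs'] by blast
  have "AL_partial_path (Suc p) (Suc p * m) (v @ v')"
    using AL_partial_path_phase_step[OF v(1)] v'(1) by (intro AL_partial_path_append) auto
  then show ?case using v v' by (auto simp: repeat_path_append)
qed

lemma M_ge_of_AL_shattered:
  fixes H :: "('x \<Rightarrow> bool) set" and A :: "'x learner" and m P :: nat
  assumes sh: "AL_shattered H w d t" and m: "1 \<le> m"
    and P: "P \<le> w" "P * m \<le> d" "m * (P * m) \<le> T"
  shows "ennreal (real m * real P / 3) \<le> M A T H"
proof -
  define \<alpha> where "\<alpha> = 1 / (2 * real m)"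
  let ?a = "phases t m \<alpha> P []"
  have "unit_weights ?a" using m by (intro unit_weights_phases) (auto simp: \<alpha>_def)
  then obtain zs where zs: "zs \<in> outcomes ?a" "adv_loss A ?a [] \<le> adv_loss A (plays zs Stop) []"
    using exists_outcome_adv_loss_ge[of ?a A "[]" "[]"] by auto
  obtain v where v: "AL_partial_path P (P * m) v" "zs = repeat_path t m [] v"
    using outcomes_phases[OF zs(1)] by blast
  obtain h where h: "h \<in> H" "path_consistent t v h"
    using AL_shattered_partial_path[OF sh AL_partial_path_mono[OF v(1) P(1,2)]] by blast
  have "(fst z, h (fst z)) = z" if "z \<in> set zs" for z
    using path_consistent_repeat_path[of t "[]" v h] h(2) v(2) that by (cases z) auto
  then have labels: "map (\<lambda>x. (x, h x)) (map fst zs) = zs" by (auto intro: map_idI)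
  have "length zs \<le> m * (P * m)" using AL_partial_path_length_le[OF v(1)] v(2) by simp
  then have "length (map fst zs @ replicate (T - length zs) (t [])) = T" using P(3) by simp
  moreover have "real m * real P / 3 \<le> loss A h (map fst zs @ replicate (T - length zs) (t [])) []"
  proof -
    have "real m * real P / 3 \<le> adv_loss A (plays zs Stop) []"
      using adv_loss_phases_ge[OF m \<alpha>_def] zs(2) by (rule order_trans)
    also have "\<dots> = loss A h (map fst zs) []" by (simp only: loss_def labels)
    also have "\<dots> \<le> loss A h (map fst zs @ replicate (T - length zs) (t [])) []"
      by (rule loss_le_append)
    finally show ?thesis .
  qed
  ultimately show ?thesis using h(1) by (blast intro: order_trans[OF ennreal_leI loss_le_M])
qed

lemma ennreal_eighth:
  assumes "0 \<le> x"
  shows "(1 / 8 :: ennreal) * ennreal x = ennreal (x / 8)"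
proof -
  have "(1 / 8 :: ennreal) = ennreal (1 / 8)"
    by (metis divide_ennreal ennreal_1 ennreal_numeral zero_less_numeral zero_le_one)
  then show ?thesis using assms by (simp add: ennreal_mult[symmetric])
qed

lemma M_ge_of_AL_shattered_horizon:
  fixes H :: "('x \<Rightarrow> bool) set" and A :: "'x learner"
  assumes "AL_shattered H w d t" "n \<le> w" "n \<le> d" "n \<le> T"
  shows "(1 / 8) * of_nat n \<le> M A T H"
proof -
  have "(1 / 8) * of_nat n = ennreal (real n / 8)"
    by (simp add: ennreal_of_nat_eq_real_of_nat ennreal_eighth)
  also have "\<dots> \<le> ennreal (real 1 * real n / 3)" by (intro ennreal_leI) simp
  also have "\<dots> \<le> M A T H" by (rule M_ge_of_AL_shattered[OF assms(1)]) (use assms in auto)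
  finally show ?thesis .
qed

lemma M_ge_L_dim:
  fixes H :: "('x \<Rightarrow> bool) set" and A :: "'x learner"
  shows "(1 / 8) * min (ennreal_of_enat (L_dim H)) (of_nat T) \<le> M A T H"
proof -
  obtain n where n: "n \<le> T" "enat n \<le> L_dim H" "min (ennreal_of_enat (L_dim H)) (of_nat T) = of_nat n"
  proof (cases "L_dim H")
    case (enat l)
    then show ?thesis by (intro that[of "min l T"]) (auto simp: min_def)
  qed (intro that[of T]; simp)
  show ?thesis
  proof (cases "n = 0")
    case False
    obtain t where "L_shattered H n t"
      by (rule L_shattered_if_le_L_dim[OF n(2)]) (use False in auto)
    then have "AL_shattered H n n t" by (simp add: L_shattered_iff_AL_shattered)
    then show ?thesis unfolding n(3) using M_ge_of_AL_shattered_horizon n(1) by blast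
  qed (simp add: n(3))
qed

lemma block_length_exists:
  fixes k T :: nat
  assumes "1 \<le> k" "k < T"
  obtains m where "1 \<le> m" "m * (k * m) \<le> T" "sqrt (real k * T) / 8 \<le> real m * real k / 3"
proof -
  define s where "s = sqrt (real T / real k)"
  define m where "m = nat \<lfloor>s\<rfloor>"
  have k: "0 < real k" and Tk: "1 \<le> real T / real k" using assms by auto
  then have s1: "1 \<le> s" unfolding s_def by simp
  have m: "real m \<le> s" "s < real m + 1" "1 \<le> real m"
    using s1 by (auto simp: m_def)
  have "real m * real m \<le> s * s" using m by (intro mult_mono) auto
  also have "s * s = real T / real k" unfolding s_def using Tk by simp
  finally have "real m * (real k * real m) \<le> real T" using k by (simp add: field_simps)
  then have "m * (k * m) \<le> T" by (metis of_nat_le_iff of_nat_mult)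
  moreover have "sqrt (real k * T) = real k * s"
    using k by (simp add: s_def real_sqrt_divide real_sqrt_mult field_simps)
  then have "sqrt (real k * T) / 8 \<le> real m * real k / 3" using m k by (simp add: field_simps)
  ultimately show ?thesis using m(3) by (intro that[of m]) auto
qed

lemma M_ge_of_AL_dim_infinity:
  fixes H :: "('x \<Rightarrow> bool) set" and A :: "'x learner"
  assumes k: "AL_dim k H = \<infinity>" "1 \<le> k" and T: "1 \<le> T"
  shows "(1 / 8) * min (ennreal (sqrt (real k * T))) (of_nat T) \<le> M A T H"
proof (cases "T \<le> k")
  case True
  obtain t where "AL_shattered H k T t"
    by (rule AL_shattered_if_le_AL_dim[of T k H]) (use k T in auto)
  then have "(1 / 8) * of_nat T \<le> M A T H" by (rule M_ge_of_AL_shattered_horizon) (use True in auto)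
  then show ?thesis by (rule order_trans[rotated]) (intro mult_left_mono; simp)
next
  case False
  obtain m where m: "1 \<le> m" "m * (k * m) \<le> T" "sqrt (real k * T) / 8 \<le> real m * real k / 3"
    using block_length_exists[OF k(2), of T] False by auto
  obtain t where "AL_shattered H k (k * m) t"
    by (rule AL_shattered_if_le_AL_dim[of "k * m" k H]) (use k m(1) in auto)
  then have "ennreal (real m * real k / 3) \<le> M A T H"
    by (rule M_ge_of_AL_shattered) (use m in auto)
  moreover have "(1 / 8) * min (ennreal (sqrt (real k * T))) (of_nat T) \<le> ennreal (sqrt (real k * T) / 8)"
    using mult_left_mono[OF min.cobounded1, of "1 / 8" "ennreal (sqrt (real k * T))" "of_nat T"]
    by (simp add: ennreal_eighth)
  ultimately show ?thesis using m(3) by (metis ennreal_leI order_trans)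
qed

lemma M_ge_sqrt_term:
  fixes H :: "('x \<Rightarrow> bool) set" and A :: "'x learner"
  assumes T: "1 \<le> T"
  shows "(1 / 8) * min (sqrt_term H T) (of_nat T) \<le> M A T H"
proof (cases "eff_width H")
  case infinity
  have "(1 / 8) * min (ennreal (sqrt (real T * T))) (of_nat T) \<le> M A T H"
    by (rule M_ge_of_AL_dim_infinity[OF eff_width_infinity[OF infinity T] T T])
  then show ?thesis using infinity by (simp add: sqrt_term_def ennreal_of_nat_eq_real_of_nat)
next
  case (enat W)
  show ?thesis
  proof (cases "W = 1")
    case False
    then have "AL_dim (W - 1) H = \<infinity>" "1 \<le> W - 1" "real W - 1 = real (W - 1)"
      using eff_width_enat[OF enat] by auto
    then show ?thesis using M_ge_of_AL_dim_infinity[of "W - 1" H T A] T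
      by (simp add: sqrt_term_def enat)
  qed (simp add: sqrt_term_def enat)
qed

lemma INF_M_ge:
  fixes H :: "('x \<Rightarrow> bool) set"
  assumes "1 \<le> T"
  shows "(1 / 8) * min (max (sqrt_term H T) (ennreal_of_enat (L_dim H))) (of_nat T)
    \<le> (INF A :: 'x learner. M A T H)"
proof (rule INF_greatest)
  fix A :: "'x learner"
  show "(1 / 8) * min (max (sqrt_term H T) (ennreal_of_enat (L_dim H))) (of_nat T) \<le> M A T H"
    using M_ge_sqrt_term[OF assms, of H A] M_ge_L_dim[of H T A]
    by (cases "sqrt_term H T \<le> ennreal_of_enat (L_dim H)") (simp_all add: max_def)
qed

theorem theorem1:
  fixes H :: "('x \<Rightarrow> bool) set" and T :: nat
  assumes "T \<ge> 1"
  shows "(1/8) * min (max (sqrt_term H T) (ennreal_of_enat (L_dim H))) (of_nat T)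
           \<le> (INF A :: 'x learner. M A T H)
       \<and> (INF A :: 'x learner. M A T H)
           \<le> (case eff_width H of
                 enat w \<Rightarrow> ennreal_of_enat (AL_dim w H) + 2 * sqrt_term H T
               | \<infinity> \<Rightarrow> \<infinity>)"
  using INF_M_ge[OF assms] INF_M_le[OF assms] by blast

end
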